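(* Let $\mathbb{Y}$ be a lcscH space. Let $(\zeta_n)_{n\in\mathbb{N}}$ be a sequence of locally finite point processes on $\mathbb{Y}$ and let $\zeta$ be another locally finite point process on $\mathbb{Y}$ such that $\mathbf{d}_{\mathbf{KR}}(\zeta_n,\zeta)\to 0$ as $n\to\infty$. Then $\zeta_n$ converges in distribution to $\zeta$ as $n\to\infty$.
   Context: A lcscH space is a locally compact Hausdorff space with countable base, equipped with its Borel $\sigma$-field. $\mathsf{N}_{\mathbb{Y}}$ denotes the space of $\sigma$-finite counting measures on $\mathbb{Y}$, with the $\sigma$-field generated by the maps $\omega\mapsto\omega(A)$, $A$ Borel; $\widetilde{\mathsf{N}}_{\mathbb{Y}}\subset\mathsf{N}_{\mathbb{Y}}$ is the set of locally finite counting measures (finite on relatively compact sets), equipped with the vague topology (generated by the maps $\omega\mapsto\int g\,d\omega$ for continuous compactly supported $g\ge 0$). A (locally finite) point process is a random element of $\mathsf{N}_{\mathbb{Y}}$ (resp. $\widetilde{\mathsf{N}}_{\mathbb{Y}}$); convergence in distribution refers to the vague topology. For measures $\nu_1,\nu_2$ on $\mathbb{Y}$, $\mathbf{d}_{\mathbf{TV}}(\nu_1,\nu_2):=\sup\{|\nu_1(A)-\nu_2(A)|: A \text{ Borel},\ \nu_1(A),\nu_2(A)<\infty\}$. For point processes with distributions $\mathbb{Q}_1,\mathbb{Q}_2$ on $\mathsf{N}_{\mathbb{Y}}$, the Kantorovich–Rubinstein distance is $\mathbf{d}_{\mathbf{KR}}(\mathbb{Q}_1,\mathbb{Q}_2):=\inf_{\mathbb{C}}\int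 \mathbf{d}_{\mathbf{TV}}(\omega_1,\omega_2)\,\mathbb{C}(d(\omega_1,\omega_2))$, the infimum over all probability measures $\mathbb{C}$ on $\mathsf{N}_{\mathbb{Y}}\times\mathsf{N}_{\mathbb{Y}}$ with marginals $\mathbb{Q}_1$ and $\mathbb{Q}_2$; one writes $\mathbf{d}_{\mathbf{KR}}(\zeta_n,\zeta)$ for the distance between the distributions. *)

theory Defs
  imports "HOL-Probability.Probability"
begin

definition counting_measures :: "'a::topological_space measure set" where
  "counting_measures = {\<omega>. sets \<omega> = sets borel \<and> sigma_finite_measure \<omega> \<and>
      (\<forall>A\<in>sets borel. emeasure \<omega> A \<in> range of_nat \<union> {\<infinity>})}"

definition NY :: "'a::topological_space measure measure" where
  "NY = sigma counting_measures
      {{\<omega>\<in>counting_measures. emeasure \<omega> A \<in> B} | A B. A \<in> sets borel \<and> B \<in> sets borel}"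

definition loc_fin_counting_measures :: "'a::topological_space measure set" where
  "loc_fin_counting_measures = {\<omega>\<in>counting_measures.
      \<forall>A\<in>sets borel. compact (closure A) \<longrightarrow> emeasure \<omega> A < \<infinity>}"

definition vague_topology :: "'a::topological_space measure topology" where
  "vague_topology = topology_generated_by
     {{\<omega>\<in>loc_fin_counting_measures. integral\<^sup>L \<omega> (g::'a \<Rightarrow> real) \<in> U} | g U.
        continuous_on UNIV g \<and> compact (closure {x. g x \<noteq> 0}) \<and> (\<forall>x. g x \<ge> 0) \<and> open U}"

definition dTV :: "'a::topological_space measure \<Rightarrow> 'a measure \<Rightarrow> ennreal" where
  "dTV \<nu>1 \<nu>2 = (SUP A\<in>{A\<in>sets borel. emeasure \<nu>1 A < \<infinity> \<and> emeasure \<nu>2 A < \<infinity>}.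
        ennreal \<bar>measure \<nu>1 A - measure \<nu>2 A\<bar>)"

definition couplings :: "'a::topological_space measure measure \<Rightarrow> 'a measure measure
     \<Rightarrow> ('a measure \<times> 'a measure) measure set" where
  "couplings Q1 Q2 = {C. prob_space C \<and> sets C = sets (NY \<Otimes>\<^sub>M NY) \<and>
      distr C NY fst = Q1 \<and> distr C NY snd = Q2}"

definition dKR :: "'a::topological_space measure measure \<Rightarrow> 'a measure measure \<Rightarrow> ennreal" where
  "dKR Q1 Q2 = (INF C\<in>couplings Q1 Q2. \<integral>\<^sup>+ p. dTV (fst p) (snd p) \<partial>C)"

definition point_process_distr :: "'a::topological_space measure measure \<Rightarrow> bool" where
  "point_process_distr Q \<longleftrightarrow> prob_space Q \<and> sets Q = sets NY"

definition loc_fin_point_process_distr :: "'a::topological_space measure measure \<Rightarrow> bool" where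
  "loc_fin_point_process_distr Q \<longleftrightarrow> point_process_distr Q \<and>
      (AE \<omega> in Q. \<omega> \<in> loc_fin_counting_measures)"

definition converges_in_distribution ::
    "(nat \<Rightarrow> 'a::topological_space measure measure) \<Rightarrow> 'a measure measure \<Rightarrow> bool" where
  "converges_in_distribution Qs Q \<longleftrightarrow>
     (\<forall>F::'a measure \<Rightarrow> real. continuous_map vague_topology euclideanreal F \<and>
        bounded (F ` topspace vague_topology) \<longrightarrow>
        (\<lambda>n. \<integral>\<omega>. indicator loc_fin_counting_measures \<omega> * F \<omega> \<partial>(Qs n))
          \<longlonglongrightarrow> (\<integral>\<omega>. indicator loc_fin_counting_measures \<omega> * F \<omega> \<partial>Q))"

end

theory Submission
  imports Defs
begin

text \<open>Two locally finite counting measures at total variation distance less than 1 coincide: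
  on relatively compact sets their values are natural numbers differing by less than 1, and
  the space is exhausted by countably many relatively compact open sets. Hence, under any
  coupling of two locally finite point processes, a functional with oscillation at most 1
  differs at the two coordinates by at most their total variation distance. Integrating, the
  expectations of a bounded measurable functional under the two processes differ by at most a
  multiple of their Kantorovich-Rubinstein distance; bounded vaguely continuous functionals are
  a special case.\<close>

lemma compact_closure_subset:
  fixes S K :: "'a::t2_space set"
  assumes "compact K" "S \<subseteq> K"
  shows "compact (closure S)"
proof -
  have "closure S \<subseteq> K"
    using assms by (intro closure_minimal compact_imp_closed)
  then have "K \<inter> closure S = closure S"
    by blast
  then show ?thesis
    using compact_Int_closed[OF assms(1) closed_closure, of S] by simp
qed

lemma locally_compact_exhaustion:
  assumes "locally_compact_space (euclidean :: 'a topology)"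
  obtains W :: "nat \<Rightarrow> 'a::{t2_space, second_countable_topology} set"
  where "\<And>n. open (W n)" "\<And>n. compact (closure (W n))" "incseq W" "(\<Union>n. W n) = UNIV"
proof -
  define F where "F = {U::'a set. open U \<and> compact (closure U)}"
  have "\<exists>U. open U \<and> compact (closure U) \<and> x \<in> U" for x :: 'a
  proof -
    have "\<exists>U K. openin euclidean U \<and> compactin euclidean K \<and> x \<in> U \<and> U \<subseteq> K"
      using assms unfolding locally_compact_space_def by simp
    then obtain U K where U: "open U" "x \<in> U" and K: "compact K" "U \<subseteq> K"
      by auto
    from K have "compact (closure U)"
      by (rule compact_closure_subset)
    with U show ?thesis
      by blast
  qed
  then have "\<Union>F = UNIV"
    unfolding F_def by blast
  have "\<And>U. U \<in> F \<Longrightarrow> open U"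
    unfolding F_def by blast
  then obtain F' where F': "F' \<subseteq> F" "countable F'" "\<Union>F' = \<Union>F"
    by (rule Lindelof)
  then have "F' \<noteq> {}"
    using \<open>\<Union>F = UNIV\<close> by auto
  define V where "V = from_nat_into F'"
  have V: "range V = F'"
    unfolding V_def using range_from_nat_into[OF \<open>F' \<noteq> {}\<close> F'(2)] .
  then have V_open: "open (V i)" and V_compact: "compact (closure (V i))" for i
    using F'(1) unfolding F_def by auto
  show ?thesis
  proof
    fix n
    show "open (\<Union>i\<le>n. V i)"
      using V_open by (intro open_UN) blast
    have "compact (\<Union>i\<le>n. closure (V i))"
      using V_compact by (intro compact_UN) auto
    then show "compact (closure (\<Union>i\<le>n. V i))"
      by (rule compact_closure_subset) (intro UN_mono subset_refl closure_subset)
  next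
    show "incseq (\<lambda>n. \<Union>i\<le>n. V i)"
      unfolding incseq_def by (intro allI impI UN_mono) auto
    have "(\<Union>n. V n) = UNIV"
      using V F'(3) \<open>\<Union>F = UNIV\<close> by simp
    then show "(\<Union>n. \<Union>i\<le>n. V i) = UNIV"
      by fastforce
  qed
qed

lemma counting_measures_finite_value:
  assumes "\<omega> \<in> counting_measures" "A \<in> sets borel" "emeasure \<omega> A < \<infinity>"
  obtains a :: nat where "emeasure \<omega> A = of_nat a" "measure \<omega> A = real a"
proof -
  obtain a where a: "emeasure \<omega> A = of_nat a"
    using assms unfolding counting_measures_def by fastforce
  then have "measure \<omega> A = real a"
    by (simp add: measure_def ennreal_of_nat_eq_real_of_nat)
  with a that show ?thesis by blast
qed

lemma emeasure_eq_if_dTV_less_1: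
  assumes \<omega>1: "\<omega>1 \<in> counting_measures" and \<omega>2: "\<omega>2 \<in> counting_measures"
    and A: "A \<in> sets borel" "emeasure \<omega>1 A < \<infinity>" "emeasure \<omega>2 A < \<infinity>"
    and dTV: "dTV \<omega>1 \<omega>2 < 1"
  shows "emeasure \<omega>1 A = emeasure \<omega>2 A"
proof -
  obtain a where a: "emeasure \<omega>1 A = of_nat a" "measure \<omega>1 A = real a"
    using counting_measures_finite_value[OF \<omega>1 A(1,2)] .
  obtain b where b: "emeasure \<omega>2 A = of_nat b" "measure \<omega>2 A = real b"
    using counting_measures_finite_value[OF \<omega>2 A(1,3)] .
  have "ennreal \<bar>real a - real b\<bar> = ennreal \<bar>measure \<omega>1 A - measure \<omega>2 A\<bar>"
    using a b by simp
  also have "\<dots> \<le> dTV \<omega>1 \<omega>2"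
    unfolding dTV_def by (rule SUP_upper) (use A in auto)
  also have "\<dots> < 1"
    by (fact dTV)
  finally have "a = b"
    by simp
  with a b show ?thesis by simp
qed

lemma loc_fin_counting_measures_eq_if_dTV_less_1:
  fixes \<omega>1 \<omega>2 :: "'a::{t2_space, second_countable_topology} measure"
  assumes "locally_compact_space (euclidean :: 'a topology)"
    and \<omega>1: "\<omega>1 \<in> loc_fin_counting_measures" and \<omega>2: "\<omega>2 \<in> loc_fin_counting_measures"
    and dTV: "dTV \<omega>1 \<omega>2 < 1"
  shows "\<omega>1 = \<omega>2"
proof -
  obtain W :: "nat \<Rightarrow> 'a set" where W: "\<And>n. open (W n)" "\<And>n. compact (closure (W n))"
    "incseq W" "(\<Union>n. W n) = UNIV"
    using locally_compact_exhaustion[OF assms(1)] by blast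
  have counting: "\<omega>1 \<in> counting_measures" "\<omega>2 \<in> counting_measures"
    using \<omega>1 \<omega>2 unfolding loc_fin_counting_measures_def by auto
  then have sets: "sets \<omega>1 = sets borel" "sets \<omega>2 = sets borel"
    unfolding counting_measures_def by auto
  show ?thesis
  proof (rule measure_eqI)
    show "sets \<omega>1 = sets \<omega>2"
      using sets by simp
    fix A assume "A \<in> sets \<omega>1"
    then have "A \<in> sets borel"
      using sets by simp
    then have A_W: "A \<inter> W n \<in> sets borel" for n
      using borel_open[OF W(1)] by (rule sets.Int)
    have "compact (closure (A \<inter> W n))" for n
      using W(2) by (rule compact_closure_subset) (use closure_subset[of "W n"] in blast)
    then have finite: "emeasure \<omega> (A \<inter> W n) < \<infinity>" if "\<omega> \<in> loc_fin_counting_measures" for \<omega> n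
      using that A_W unfolding loc_fin_counting_measures_def by blast
    have eq: "emeasure \<omega>1 (A \<inter> W n) = emeasure \<omega>2 (A \<inter> W n)" for n
      using counting A_W finite[OF \<omega>1] finite[OF \<omega>2] dTV by (rule emeasure_eq_if_dTV_less_1)
    have "incseq (\<lambda>n. A \<inter> W n)"
      using W(3) unfolding incseq_def by blast
    moreover have "(\<Union>n. A \<inter> W n) = A"
      using W(4) by blast
    ultimately have exhaust: "emeasure \<omega> A = (SUP n. emeasure \<omega> (A \<inter> W n))"
      if "sets \<omega> = sets borel" for \<omega>
      using SUP_emeasure_incseq[of "\<lambda>n. A \<inter> W n" \<omega>] A_W that by (simp add: image_subset_iff)
    show "emeasure \<omega>1 A = emeasure \<omega>2 A"
      unfolding exhaust[OF sets(1)] exhaust[OF sets(2)] eq ..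
  qed
qed

lemma oscillation_le_dTV:
  fixes \<omega>1 \<omega>2 :: "'a::{t2_space, second_countable_topology} measure"
  assumes "locally_compact_space (euclidean :: 'a topology)"
    and "\<omega>1 \<in> loc_fin_counting_measures" "\<omega>2 \<in> loc_fin_counting_measures"
    and "\<bar>k \<omega>1 - k \<omega>2\<bar> \<le> 1"
  shows "ennreal \<bar>k \<omega>1 - k \<omega>2\<bar> \<le> dTV \<omega>1 \<omega>2"
proof (cases "dTV \<omega>1 \<omega>2 < 1")
  case True
  with assms(1-3) have "\<omega>1 = \<omega>2"
    by (rule loc_fin_counting_measures_eq_if_dTV_less_1)
  then show ?thesis by simp
next
  case False
  have "ennreal \<bar>k \<omega>1 - k \<omega>2\<bar> \<le> 1"
    using assms(4) by (simp add: ennreal_le_1)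
  also have "1 \<le> dTV \<omega>1 \<omega>2"
    using False by simp
  finally show ?thesis .
qed

lemma coupling_marginals:
  assumes "C \<in> couplings Q1 Q2"
  shows "fst \<in> measurable C NY" "snd \<in> measurable C NY"
    and "distr C NY fst = Q1" "distr C NY snd = Q2"
proof -
  have "sets C = sets (NY \<Otimes>\<^sub>M NY)"
    using assms unfolding couplings_def by blast
  then show "fst \<in> measurable C NY" "snd \<in> measurable C NY"
    using measurable_cong_sets[OF _ refl] measurable_fst measurable_snd by blast+
  show "distr C NY fst = Q1" "distr C NY snd = Q2"
    using assms unfolding couplings_def by auto
qed

lemma integral_diff_le_dKR:
  fixes Q1 Q2 :: "'a::{t2_space, second_countable_topology} measure measure"
  assumes lc: "locally_compact_space (euclidean :: 'a topology)"
    and Q1: "loc_fin_point_process_distr Q1" and Q2: "loc_fin_point_process_distr Q2"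
    and k: "k \<in> borel_measurable NY" and osc: "\<And>\<omega>1 \<omega>2. \<bar>k \<omega>1 - k \<omega>2\<bar> \<le> 1"
  shows "ennreal \<bar>(\<integral>\<omega>. k \<omega> \<partial>Q1) - (\<integral>\<omega>. k \<omega> \<partial>Q2)\<bar> \<le> dKR Q1 Q2"
  unfolding dKR_def
proof (rule INF_greatest)
  fix C assume C: "C \<in> couplings Q1 Q2"
  then interpret prob_space C
    unfolding couplings_def by blast
  note marginals = coupling_marginals[OF C]
  have "norm (k \<omega>) \<le> 1 + \<bar>k undefined\<bar>" for \<omega>
    using osc[of \<omega> undefined] by simp
  then have integrable: "integrable C (\<lambda>p. k (\<pi> p))" if "\<pi> \<in> measurable C NY" for \<pi>
    using measurable_compose[OF that k] by (intro integrable_const_bound) auto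
  have "(\<integral>\<omega>. k \<omega> \<partial>Q1) - (\<integral>\<omega>. k \<omega> \<partial>Q2) = (\<integral>p. k (fst p) - k (snd p) \<partial>C)"
    using integral_distr[OF marginals(1) k] integral_distr[OF marginals(2) k] marginals(3,4)
      integrable[OF marginals(1)] integrable[OF marginals(2)] by simp
  then have "ennreal \<bar>(\<integral>\<omega>. k \<omega> \<partial>Q1) - (\<integral>\<omega>. k \<omega> \<partial>Q2)\<bar>
      = ennreal (norm (\<integral>p. k (fst p) - k (snd p) \<partial>C))"
    by simp
  also have "\<dots> \<le> (\<integral>\<^sup>+p. norm (k (fst p) - k (snd p)) \<partial>C)"
    using integrable[OF marginals(1)] integrable[OF marginals(2)]
    by (intro integral_norm_bound_ennreal Bochner_Integration.integrable_diff)
  also have "\<dots> \<le> (\<integral>\<^sup>+p. dTV (fst p) (snd p) \<partial>C)"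
  proof (rule nn_integral_mono_AE)
    have "AE p in C. fst p \<in> loc_fin_counting_measures \<and> snd p \<in> loc_fin_counting_measures"
      using AE_distrD[OF marginals(1)] AE_distrD[OF marginals(2)] Q1 Q2 marginals(3,4)
      unfolding loc_fin_point_process_distr_def by auto
    then show "AE p in C. ennreal (norm (k (fst p) - k (snd p))) \<le> dTV (fst p) (snd p)"
      using oscillation_le_dTV[OF lc] osc by auto
  qed
  finally show "ennreal \<bar>(\<integral>\<omega>. k \<omega> \<partial>Q1) - (\<integral>\<omega>. k \<omega> \<partial>Q2)\<bar>
      \<le> (\<integral>\<^sup>+p. dTV (fst p) (snd p) \<partial>C)" .
qed

lemma integral_tendsto_if_dKR_tendsto_0:
  fixes Qs :: "nat \<Rightarrow> 'a::{t2_space, second_countable_topology} measure measure"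
    and h :: "'a measure \<Rightarrow> real"
  assumes lc: "locally_compact_space (euclidean :: 'a topology)"
    and Qs: "\<And>n. loc_fin_point_process_distr (Qs n)" and Q: "loc_fin_point_process_distr Q"
    and dKR: "(\<lambda>n. dKR (Qs n) Q) \<longlonglongrightarrow> 0"
    and h: "h \<in> borel_measurable NY" and bound: "B > 0" "\<And>\<omega>. \<bar>h \<omega>\<bar> \<le> B"
  shows "(\<lambda>n. \<integral>\<omega>. h \<omega> \<partial>Qs n) \<longlonglongrightarrow> (\<integral>\<omega>. h \<omega> \<partial>Q)"
proof -
  define k where "k \<omega> = h \<omega> / (2 * B)" for \<omega>
  have "\<bar>k \<omega>1 - k \<omega>2\<bar> \<le> 1" for \<omega>1 \<omega>2
    using bound(2)[of \<omega>1] bound(2)[of \<omega>2] \<open>B > 0\<close>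
    by (simp add: k_def abs_le_iff divide_simps)
  moreover have "k \<in> borel_measurable NY"
    unfolding k_def using h by measurable
  ultimately have "ennreal \<bar>(\<integral>\<omega>. k \<omega> \<partial>Qs n) - (\<integral>\<omega>. k \<omega> \<partial>Q)\<bar> \<le> dKR (Qs n) Q" for n
    using integral_diff_le_dKR[OF lc Qs Q] by blast
  then have "(\<lambda>n. ennreal \<bar>(\<integral>\<omega>. k \<omega> \<partial>Qs n) - (\<integral>\<omega>. k \<omega> \<partial>Q)\<bar>) \<longlonglongrightarrow> ennreal 0"
    using tendsto_sandwich[OF _ _ tendsto_const dKR] by simp
  then have "(\<lambda>n. \<bar>(\<integral>\<omega>. k \<omega> \<partial>Qs n) - (\<integral>\<omega>. k \<omega> \<partial>Q)\<bar>) \<longlonglongrightarrow> 0"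
    by (subst (asm) tendsto_ennreal_iff) auto
  then have "(\<lambda>n. (\<integral>\<omega>. k \<omega> \<partial>Qs n) - (\<integral>\<omega>. k \<omega> \<partial>Q)) \<longlonglongrightarrow> 0"
    by (simp add: tendsto_rabs_zero_iff)
  then have "(\<lambda>n. 2 * B * ((\<integral>\<omega>. k \<omega> \<partial>Qs n) - (\<integral>\<omega>. k \<omega> \<partial>Q))) \<longlonglongrightarrow> 0"
    by (simp add: tendsto_mult_right_zero)
  moreover have "h = (\<lambda>\<omega>. 2 * B * k \<omega>)"
    using \<open>B > 0\<close> by (simp add: k_def)
  ultimately show ?thesis
    by (simp add: LIM_zero_iff right_diff_distrib)
qed

lemma loc_fin_counting_measures_subset_topspace_vague:
  "loc_fin_counting_measures \<subseteq> topspace (vague_topology :: 'a::topological_space measure topology)"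
proof -
  let ?zero = "\<lambda>x::'a. 0::real"
  have "continuous_on UNIV ?zero \<and> compact (closure {x. ?zero x \<noteq> 0}) \<and> (\<forall>x. ?zero x \<ge> 0)
      \<and> open (UNIV :: real set)"
    by simp
  then have "{\<omega>\<in>loc_fin_counting_measures. integral\<^sup>L \<omega> ?zero \<in> UNIV} \<in>
     {{\<omega>\<in>loc_fin_counting_measures. integral\<^sup>L \<omega> (g::'a \<Rightarrow> real) \<in> U} | g U.
        continuous_on UNIV g \<and> compact (closure {x. g x \<noteq> 0}) \<and> (\<forall>x. g x \<ge> 0) \<and> open U}"
    by blast
  then show ?thesis
    unfolding vague_topology_def by auto
qed

theorem proposition2p1:
  fixes Qs :: "nat \<Rightarrow> 'a::{t2_space, second_countable_topology} measure measure"
    and Q :: "'a measure measure"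
  assumes "locally_compact_space (euclidean :: 'a topology)"
    and "\<And>n. loc_fin_point_process_distr (Qs n)"
    and "loc_fin_point_process_distr Q"
    and "(\<lambda>n. dKR (Qs n) Q) \<longlonglongrightarrow> 0"
  shows "converges_in_distribution Qs Q"
  unfolding converges_in_distribution_def
proof (intro allI impI)
  fix F :: "'a measure \<Rightarrow> real"
  let ?h = "\<lambda>\<omega>. indicator loc_fin_counting_measures \<omega> * F \<omega>"
  assume "continuous_map vague_topology euclideanreal F \<and> bounded (F ` topspace vague_topology)"
  then have "bounded (F ` loc_fin_counting_measures)"
    using loc_fin_counting_measures_subset_topspace_vague by (meson bounded_subset image_mono)
  then obtain B where "B > 0" "\<And>\<omega>. \<omega> \<in> loc_fin_counting_measures \<Longrightarrow> \<bar>F \<omega>\<bar> \<le> B"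
    unfolding bounded_pos by auto
  then have bound: "\<bar>?h \<omega>\<bar> \<le> B" for \<omega>
    by (cases "\<omega> \<in> loc_fin_counting_measures") auto
  show "(\<lambda>n. \<integral>\<omega>. ?h \<omega> \<partial>Qs n) \<longlonglongrightarrow> (\<integral>\<omega>. ?h \<omega> \<partial>Q)"
  proof (cases "?h \<in> borel_measurable NY")
    case True
    from assms True \<open>B > 0\<close> bound show ?thesis
      by (rule integral_tendsto_if_dKR_tendsto_0)
  next
    case False
    \<comment> \<open>The Bochner integral of a non-measurable function is 0 under every distribution.\<close>
    have zero: "(\<integral>\<omega>. ?h \<omega> \<partial>M) = 0" if "sets M = sets NY" for M
      using False measurable_cong_sets[OF that refl] by (blast intro: not_integrable_integral_eq)
    have "sets (Qs n) = sets NY" "sets Q = sets NY" for n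
      using assms(2,3) unfolding loc_fin_point_process_distr_def point_process_distr_def by auto
    then show ?thesis
      by (simp add: zero)
  qed
qed

end
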